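(* Let $I$ be any set of nonnegative integers. Let $\mathcal A_I$ be the class of simple graphs whose degree sequence $d$ satisfies $\Delta_{m(d)}(d)\in I$, and let $\mathcal B_I$ be the class of simple graphs whose degree sequence $d$ satisfies $\Delta^*(d)\in I$. Then both $\mathcal A_I$ and $\mathcal B_I$ are closed under graph complementation. In particular (taking $\mathcal A_{\{0\}}$, $\mathcal B_{\{0\}}$, $\mathcal B_{\{0,1\}}$) the classes of split graphs, threshold graphs, and weakly threshold graphs are closed under complementation.
   Context: Degree sequences $d=(d_1,\dots,d_n)$ are listed in nonincreasing order. $m(d)=\max\{i : d_i\ge i-1\}$. For integers $k\ge 0$, $\Delta_k(d)=k(k-1)+\sum_{i>k}\min\{k,d_i\}-\sum_{i\le k}d_i$, and $\Delta^*(d)=\max\{\Delta_k(d):1\le k\le m(d)\}$. A split graph is one whose vertex set partitions into a clique and an independent set; a graph with degree sequence $d$ is split iff $\Delta_{m(d)}(d)=0$. A graph with degree sequence $d$ is threshold iff $\Delta_k(d)=0$ for all $1\le k\le m(d)$ (i.e. $\Delta^*(d)=0$). A graph is weakly threshold iff its degree sequence $d$ satisfies $\Delta_k(d)\le 1$ for all $1\le k\le m(d)$. *)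

theory Defs
  imports Main "HOL-Library.Multiset"
begin

definition simple_graph :: "'a set \<Rightarrow> 'a set set \<Rightarrow> bool" where
  "simple_graph V E \<longleftrightarrow> finite V \<and>
     E \<subseteq> {e. \<exists>u v. e = {u, v} \<and> u \<noteq> v \<and> u \<in> V \<and> v \<in> V}"

definition complement :: "'a set \<Rightarrow> 'a set set \<Rightarrow> 'a set set" where
  "complement V E = {{u, v} | u v. u \<in> V \<and> v \<in> V \<and> u \<noteq> v \<and> {u, v} \<notin> E}"

definition degree :: "'a set set \<Rightarrow> 'a \<Rightarrow> nat" where
  "degree E v = card {e \<in> E. v \<in> e}"

text \<open>Degree sequence, listed in nonincreasing order; entry d_i is \<open>d ! (i - 1)\<close>.\<close>
definition deg_seq :: "'a set \<Rightarrow> 'a set set \<Rightarrow> nat list" where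
  "deg_seq V E = rev (sorted_list_of_multiset (image_mset (degree E) (mset_set V)))"

definition dd :: "nat list \<Rightarrow> nat \<Rightarrow> int" where
  "dd d i = int (d ! (i - 1))"

definition m_of :: "nat list \<Rightarrow> nat" where
  "m_of d = Max {i \<in> {1..length d}. dd d i \<ge> int i - 1}"

definition Delta :: "nat list \<Rightarrow> nat \<Rightarrow> int" where
  "Delta d k = int k * (int k - 1) + (\<Sum>i\<in>{k+1..length d}. min (int k) (dd d i))
                 - (\<Sum>i\<in>{1..k}. dd d i)"

definition Delta_star :: "nat list \<Rightarrow> int" where
  "Delta_star d = Max (Delta d ` {1..m_of d})"

definition split_graph :: "'a set \<Rightarrow> 'a set set \<Rightarrow> bool" where
  "split_graph V E \<longleftrightarrow> (\<exists>K S. K \<union> S = V \<and> K \<inter> S = {} \<and>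
      (\<forall>u\<in>K. \<forall>v\<in>K. u \<noteq> v \<longrightarrow> {u, v} \<in> E) \<and>
      (\<forall>u\<in>S. \<forall>v\<in>S. {u, v} \<notin> E))"

definition threshold_graph :: "'a set \<Rightarrow> 'a set set \<Rightarrow> bool" where
  "threshold_graph V E \<longleftrightarrow>
     (\<forall>k\<in>{1..m_of (deg_seq V E)}. Delta (deg_seq V E) k = 0)"

definition weakly_threshold_graph :: "'a set \<Rightarrow> 'a set set \<Rightarrow> bool" where
  "weakly_threshold_graph V E \<longleftrightarrow>
     (\<forall>k\<in>{1..m_of (deg_seq V E)}. Delta (deg_seq V E) k \<le> 1)"

end

theory Submission
  imports Defs
begin

text \<open>
  For a sequence d of length n, the complementary graph has the degree sequence
  d'_i = n - 1 - d_(n+1-i). Instead of Delta_k we work with the slack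
  sigma_k(d) = sum_(i>k) min(k, d_i) - sum_(i<=k) max(0, d_i - k + 1), which agrees with Delta_k
  for k <= m(d), vanishes at k = 0, and satisfies sigma_k(d') = sigma_(n-k)(d) by reflecting the
  index range. For k > m(d), sigma_k(d) lies between two values sigma_j(d) with j <= m(d)
  (take j = d_(k+1), resp. j = #{i. d_i >= k}). Hence every upper or lower bound on the
  Delta_j(d), j <= m(d), that is compatible with sigma_0 = 0 transfers to d'.
  Moreover m(d') is n - m(d), or n + 1 - m(d) when d_m = m - 1, and in the latter case
  sigma_(m-1) = sigma_m, so Delta_m is preserved exactly. Since Delta^*(d) >= Delta_1(d) >= 0 for
  every graph, Delta^* is preserved as well.
\<close>

definition admissible :: "nat list \<Rightarrow> bool" where
  "admissible d \<longleftrightarrow> sorted_wrt (\<ge>) d \<and> (\<forall>x\<in>set d. x < length d)"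

definition complement_seq :: "nat list \<Rightarrow> nat list" where
  "complement_seq d = rev (map (\<lambda>x. length d - 1 - x) d)"

definition slack :: "nat list \<Rightarrow> nat \<Rightarrow> int" where
  "slack d k = (\<Sum>i\<in>{k+1..length d}. min (int k) (dd d i))
               - (\<Sum>i\<in>{1..k}. max 0 (dd d i - int k + 1))"

lemma sum_split_Icc:
  fixes f :: "nat \<Rightarrow> int"
  assumes "a \<le> b" "b \<le> c"
  shows "(\<Sum>i\<in>{a+1..c}. f i) = (\<Sum>i\<in>{a+1..b}. f i) + (\<Sum>i\<in>{b+1..c}. f i)"
  using sum.ub_add_nat[of "a+1" b f "c - b"] assms by simp

lemma dd_nonneg: "0 \<le> dd d i"
  by (simp add: dd_def)

lemma admissible_dd_antimono:
  assumes "admissible d" "1 \<le> i" "i \<le> j" "j \<le> length d"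
  shows "dd d j \<le> dd d i"
proof -
  have "d ! (j - 1) \<le> d ! (i - 1)"
    using assms sorted_wrt_nth_less[of "(\<ge>)" d "i - 1" "j - 1"]
    by (cases "i = j") (auto simp: admissible_def)
  then show ?thesis by (simp add: dd_def)
qed

lemma admissible_dd_less_length:
  "admissible d \<Longrightarrow> 1 \<le> i \<Longrightarrow> i \<le> length d \<Longrightarrow> dd d i < int (length d)"
  by (auto simp: admissible_def dd_def)

lemma slack_0: "slack d 0 = 0"
  by (simp add: slack_def dd_nonneg min_absorb1)

lemma
  assumes "d \<noteq> []"
  shows m_of_ge_1: "1 \<le> m_of d" and m_of_le_length: "m_of d \<le> length d"
    and dd_m_of_ge: "int (m_of d) - 1 \<le> dd d (m_of d)"
proof -
  let ?M = "{i\<in>{1..length d}. dd d i \<ge> int i - 1}"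
  have "1 \<in> ?M" using assms dd_nonneg[of d 1] by (auto simp: Suc_le_eq)
  then have "m_of d \<in> ?M" unfolding m_of_def by (intro Max_in) auto
  then show "1 \<le> m_of d" "m_of d \<le> length d" "int (m_of d) - 1 \<le> dd d (m_of d)" by auto
qed

lemma m_of_greatest:
  assumes "m_of d < i" "i \<le> length d"
  shows "dd d i < int i - 1"
proof (rule ccontr)
  assume "\<not> dd d i < int i - 1"
  with assms have "i \<le> m_of d" unfolding m_of_def by (intro Max_ge) auto
  with assms show False by simp
qed

lemma dd_upto_m_of:
  assumes "admissible d" "d \<noteq> []" "1 \<le> i" "i \<le> m_of d"
  shows "int (m_of d) - 1 \<le> dd d i"
  using admissible_dd_antimono[OF assms(1,3,4)] dd_m_of_ge[OF assms(2)] m_of_le_length[OF assms(2)]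
  by simp

lemma dd_beyond_m_of:
  assumes "admissible d" "m_of d < i" "i \<le> length d"
  shows "dd d i \<le> int (m_of d) - 1"
  using admissible_dd_antimono[OF assms(1), of "m_of d + 1" i] m_of_greatest[of d "m_of d + 1"] assms
  by simp

lemma Delta_eq_slack:
  assumes "admissible d" "d \<noteq> []" "k \<le> m_of d"
  shows "Delta d k = slack d k"
proof -
  have "(\<Sum>i\<in>{1..k}. max 0 (dd d i - int k + 1)) = (\<Sum>i\<in>{1..k}. dd d i - (int k - 1))"
    using dd_upto_m_of[OF assms(1,2)] assms(3) by (intro sum.cong) force+
  also have "\<dots> = (\<Sum>i\<in>{1..k}. dd d i) - int k * (int k - 1)"
    by (simp add: sum_subtractf)
  finally show ?thesis unfolding slack_def Delta_def by simp
qed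

lemma slack_le_slack_smaller:
  assumes jk: "j \<le> k" "k \<le> length d"
    and lo: "\<And>i. 1 \<le> i \<Longrightarrow> i \<le> k \<Longrightarrow> int j \<le> dd d i"
    and hi: "\<And>i. k < i \<Longrightarrow> i \<le> length d \<Longrightarrow> dd d i \<le> int j"
  shows "slack d k \<le> slack d j"
proof -
  let ?n = "length d"
  have "(\<Sum>i\<in>{j+1..k}. min (int j) (dd d i)) = (\<Sum>i\<in>{j+1..k}. int j)"
    using lo by (intro sum.cong) (auto simp: min_absorb1)
  moreover have "(\<Sum>i\<in>{k+1..?n}. min (int j) (dd d i)) = (\<Sum>i\<in>{k+1..?n}. min (int k) (dd d i))"
  proof (intro sum.cong refl)
    fix i assume "i \<in> {k+1..?n}"
    then have "dd d i \<le> int j" using hi by simp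
    then show "min (int j) (dd d i) = min (int k) (dd d i)" using jk by simp
  qed
  ultimately have upper: "(\<Sum>i\<in>{j+1..?n}. min (int j) (dd d i))
      = int j * (int k - int j) + (\<Sum>i\<in>{k+1..?n}. min (int k) (dd d i))"
    using sum_split_Icc[OF jk, of "\<lambda>i. min (int j) (dd d i)"] jk by simp
  have "(\<Sum>i\<in>{1..j}. max 0 (dd d i - int j + 1) - (int k - int j))
      \<le> (\<Sum>i\<in>{1..j}. max 0 (dd d i - int k + 1))"
    using jk by (intro sum_mono) (auto simp: max_def)
  moreover have "0 \<le> (\<Sum>i\<in>{j+1..k}. max 0 (dd d i - int k + 1))"
    by (intro sum_nonneg) simp
  ultimately have lower: "(\<Sum>i\<in>{1..j}. max 0 (dd d i - int j + 1)) - int j * (int k - int j)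
      \<le> (\<Sum>i\<in>{1..k}. max 0 (dd d i - int k + 1))"
    using sum_split_Icc[of 0 j k "\<lambda>i. max 0 (dd d i - int k + 1)"] jk
    by (simp add: sum_subtractf)
  show ?thesis unfolding slack_def using upper lower by linarith
qed

lemma slack_ge_slack_smaller:
  assumes jk: "j \<le> k" "k \<le> length d"
    and lo: "\<And>i. 1 \<le> i \<Longrightarrow> i \<le> j \<Longrightarrow> int k \<le> dd d i"
    and hi: "\<And>i. j < i \<Longrightarrow> i \<le> length d \<Longrightarrow> dd d i < int k"
  shows "slack d j \<le> slack d k"
proof -
  let ?n = "length d"
  have "(\<Sum>i\<in>{j+1..k}. min (int j) (dd d i)) \<le> (\<Sum>i\<in>{j+1..k}. int j)"
    by (intro sum_mono) simp
  moreover have "(\<Sum>i\<in>{k+1..?n}. min (int j) (dd d i)) \<le> (\<Sum>i\<in>{k+1..?n}. min (int k) (dd d i))"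
    using jk by (intro sum_mono) simp
  ultimately have upper: "(\<Sum>i\<in>{j+1..?n}. min (int j) (dd d i))
      \<le> int j * (int k - int j) + (\<Sum>i\<in>{k+1..?n}. min (int k) (dd d i))"
    using sum_split_Icc[OF jk, of "\<lambda>i. min (int j) (dd d i)"] jk by (simp add: mult.commute)
  have "(\<Sum>i\<in>{1..j}. max 0 (dd d i - int k + 1))
      = (\<Sum>i\<in>{1..j}. max 0 (dd d i - int j + 1) - (int k - int j))"
    using lo jk by (intro sum.cong) force+
  moreover have "(\<Sum>i\<in>{j+1..k}. max 0 (dd d i - int k + 1)) = 0"
  proof (intro sum.neutral ballI)
    fix i assume "i \<in> {j+1..k}"
    then have "dd d i < int k" using hi jk by simp
    then show "max 0 (dd d i - int k + 1) = 0" by simp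
  qed
  ultimately have lower: "(\<Sum>i\<in>{1..k}. max 0 (dd d i - int k + 1))
      = (\<Sum>i\<in>{1..j}. max 0 (dd d i - int j + 1)) - int j * (int k - int j)"
    using sum_split_Icc[of 0 j k "\<lambda>i. max 0 (dd d i - int k + 1)"] jk
    by (simp add: sum_subtractf)
  show ?thesis unfolding slack_def using upper lower by linarith
qed

lemma slack_le_slack_upto_m_of:
  assumes d: "admissible d" and k: "k \<le> length d"
  obtains j where "j \<le> m_of d" "slack d k \<le> slack d j"
proof (cases "k \<le> m_of d")
  case False
  define j where "j = (if k < length d then nat (dd d (k+1)) else 0)"
  have "j \<le> m_of d"
    using dd_beyond_m_of[OF d, of "k+1"] False unfolding j_def by auto
  moreover have "slack d k \<le> slack d j"
  proof (rule slack_le_slack_smaller)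
    show "j \<le> k" "k \<le> length d" using \<open>j \<le> m_of d\<close> False k by auto
    show "int j \<le> dd d i" if "1 \<le> i" "i \<le> k" for i
      using admissible_dd_antimono[OF d that(1), of "k+1"] that dd_nonneg[of d]
      unfolding j_def by auto
    show "dd d i \<le> int j" if "k < i" "i \<le> length d" for i
      using admissible_dd_antimono[OF d, of "k+1" i] that dd_nonneg[of d]
      unfolding j_def by auto
  qed
  ultimately show ?thesis using that by blast
qed (use that in blast)

lemma slack_ge_slack_upto_m_of:
  assumes d: "admissible d" and k: "k \<le> length d"
  obtains j where "j \<le> m_of d" "slack d j \<le> slack d k"
proof (cases "k \<le> m_of d")
  case False
  define A where "A = {i\<in>{1..length d}. int k \<le> dd d i}"
  define j where "j = (if A = {} then 0 else Max A)"
  have lo: "int k \<le> dd d i" if "1 \<le> i" "i \<le> j" for i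
  proof -
    have "j \<in> A" using that Max_in[of A] unfolding j_def A_def by (auto split: if_splits)
    then show ?thesis using admissible_dd_antimono[OF d that] unfolding A_def by auto
  qed
  have hi: "dd d i < int k" if "j < i" "i \<le> length d" for i
  proof (rule ccontr)
    assume "\<not> dd d i < int k"
    with that have "i \<in> A" unfolding A_def by auto
    then have "i \<le> j" unfolding j_def A_def by (auto intro: Max_ge)
    with that show False by simp
  qed
  have "j \<le> m_of d"
  proof (rule ccontr)
    assume "\<not> j \<le> m_of d"
    then have "int k \<le> dd d j" "dd d j \<le> int (m_of d) - 1"
      using lo[of j] dd_beyond_m_of[OF d, of j]
        Max_in[of A] unfolding j_def A_def by (auto split: if_splits)
    then show False using False by simp
  qed
  moreover have "slack d j \<le> slack d k"
    using \<open>j \<le> m_of d\<close> False k lo hi by (intro slack_ge_slack_smaller) auto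
  ultimately show ?thesis using that by blast
qed (use that in blast)

lemma slack_pred_m_of:
  assumes d: "admissible d" "d \<noteq> []" and tight: "dd d (m_of d) = int (m_of d) - 1"
  shows "slack d (m_of d - 1) = slack d (m_of d)"
proof -
  let ?n = "length d"
  obtain p where p: "m_of d = p + 1"
    using m_of_ge_1[OF d(2)] by (metis add.commute le_add_diff_inverse)
  have pn: "p + 1 \<le> ?n" using m_of_le_length[OF d(2)] p by simp
  have lo: "int p \<le> dd d i" if "1 \<le> i" "i \<le> p" for i
    using dd_upto_m_of[OF d, of i] that p by simp
  have hi: "dd d i \<le> int p" if "p + 1 < i" "i \<le> ?n" for i
    using dd_beyond_m_of[OF d(1), of i] that p by simp
  define R where "R = (\<Sum>i\<in>{p+2..?n}. dd d i) - (\<Sum>i\<in>{1..p}. dd d i - int p)"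
  have "slack d p = R"
  proof -
    have "(\<Sum>i\<in>{p+2..?n}. min (int p) (dd d i)) = (\<Sum>i\<in>{p+2..?n}. dd d i)"
      using hi by (intro sum.cong) auto
    then have "(\<Sum>i\<in>{p+1..?n}. min (int p) (dd d i)) = int p + (\<Sum>i\<in>{p+2..?n}. dd d i)"
      using sum_split_Icc[of p "p+1" ?n "\<lambda>i. min (int p) (dd d i)"] pn tight p by simp
    moreover have "(\<Sum>i\<in>{1..p}. max 0 (dd d i - int p + 1)) = (\<Sum>i\<in>{1..p}. (dd d i - int p) + 1)"
      using lo by (intro sum.cong) auto
    ultimately show ?thesis unfolding slack_def R_def by (simp add: sum.distrib)
  qed
  moreover have "slack d (p + 1) = R"
  proof -
    have "(\<Sum>i\<in>{p+2..?n}. min (int (p + 1)) (dd d i)) = (\<Sum>i\<in>{p+2..?n}. dd d i)"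
    proof (intro sum.cong refl)
      fix i assume "i \<in> {p+2..?n}"
      then have "dd d i \<le> int p" using hi by simp
      then show "min (int (p + 1)) (dd d i) = dd d i" by simp
    qed
    moreover have "(\<Sum>i\<in>{1..p}. max 0 (dd d i - int (p + 1) + 1)) = (\<Sum>i\<in>{1..p}. dd d i - int p)"
      using lo by (intro sum.cong) auto
    ultimately show ?thesis unfolding slack_def R_def using tight p by simp
  qed
  ultimately show ?thesis using p by simp
qed

subsection \<open>Complementary sequences\<close>

lemma length_complement_seq [simp]: "length (complement_seq d) = length d"
  by (simp add: complement_seq_def)

lemma complement_seq_eq_Nil_iff [simp]: "complement_seq d = [] \<longleftrightarrow> d = []"
  by (simp add: complement_seq_def)

lemma dd_complement_seq:
  assumes d: "admissible d" and i: "1 \<le> i" "i \<le> length d"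
  shows "dd (complement_seq d) i = int (length d) - 1 - dd d (length d + 1 - i)"
proof -
  let ?n = "length d"
  have "dd d (?n + 1 - i) = int (d ! (?n - i))" using i by (simp add: dd_def Suc_diff_le)
  moreover have "d ! (?n - i) < ?n" using d i by (simp add: admissible_def)
  moreover have "complement_seq d ! (i - 1) = ?n - 1 - d ! (?n - i)"
    using i by (simp add: complement_seq_def rev_nth)
  ultimately show ?thesis by (simp add: dd_def of_nat_diff)
qed

lemma admissible_complement_seq:
  assumes "admissible d"
  shows "admissible (complement_seq d)"
  using assms unfolding admissible_def complement_seq_def
  by (auto simp: sorted_wrt_rev sorted_wrt_map elim!: sorted_wrt_mono_rel[rotated])

lemma complement_seq_complement_seq:
  assumes "admissible d"
  shows "complement_seq (complement_seq d) = d"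
  using assms unfolding complement_seq_def admissible_def
  by (auto simp: rev_map intro!: map_idI)

lemma sum_Icc_reflect:
  fixes f :: "nat \<Rightarrow> int"
  assumes "1 \<le> a" "b \<le> n"
  shows "(\<Sum>i\<in>{a..b}. f (n + 1 - i)) = (\<Sum>j\<in>{n+1-b..n+1-a}. f j)"
  by (rule sum.reindex_bij_witness[of _ "\<lambda>j. n+1-j" "\<lambda>i. n+1-i"]) (use assms in auto)

lemma slack_complement_seq:
  assumes d: "admissible d" and k: "k \<le> length d"
  shows "slack (complement_seq d) k = slack d (length d - k)"
proof -
  let ?n = "length d"
  define l where "l = ?n - k"
  have kl: "int k = int ?n - int l" "k + l = ?n" using k unfolding l_def by auto
  define f where "f j = min (int k) (int ?n - 1 - dd d j)" for j
  define g where "g j = max 0 (int ?n - 1 - dd d j - int k + 1)" for j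
  have "(\<Sum>i\<in>{k+1..?n}. min (int k) (dd (complement_seq d) i)) = (\<Sum>i\<in>{k+1..?n}. f (?n + 1 - i))"
    using dd_complement_seq[OF d] by (intro sum.cong) (simp_all add: f_def)
  also have "\<dots> = (\<Sum>j\<in>{1..l}. f j)"
    using sum_Icc_reflect[of "k+1" ?n ?n f] unfolding l_def by simp
  also have "\<dots> = (\<Sum>j\<in>{1..l}. int k - max 0 (dd d j - int l + 1))"
    unfolding f_def using kl by (intro sum.cong) (simp_all add: min_def max_def)
  also have "\<dots> = int l * int k - (\<Sum>j\<in>{1..l}. max 0 (dd d j - int l + 1))"
    by (simp add: sum_subtractf)
  finally have upper: "(\<Sum>i\<in>{k+1..?n}. min (int k) (dd (complement_seq d) i))
      = int l * int k - (\<Sum>j\<in>{1..l}. max 0 (dd d j - int l + 1))" .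
  have "(\<Sum>i\<in>{1..k}. max 0 (dd (complement_seq d) i - int k + 1)) = (\<Sum>i\<in>{1..k}. g (?n + 1 - i))"
    using dd_complement_seq[OF d] k by (intro sum.cong) (simp_all add: g_def)
  also have "\<dots> = (\<Sum>j\<in>{l+1..?n}. g j)"
    using sum_Icc_reflect[of 1 k ?n g] k unfolding l_def by (simp add: Suc_diff_le)
  also have "\<dots> = (\<Sum>j\<in>{l+1..?n}. int l - min (int l) (dd d j))"
    unfolding g_def using kl by (intro sum.cong) (simp_all add: min_def max_def)
  also have "\<dots> = int k * int l - (\<Sum>j\<in>{l+1..?n}. min (int l) (dd d j))"
    using kl by (simp add: sum_subtractf)
  finally have lower: "(\<Sum>i\<in>{1..k}. max 0 (dd (complement_seq d) i - int k + 1))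
      = int k * int l - (\<Sum>j\<in>{l+1..?n}. min (int l) (dd d j))" .
  show ?thesis
    unfolding slack_def length_complement_seq upper lower l_def[symmetric] by simp
qed

lemma m_of_complement_seq:
  assumes d: "admissible d" "d \<noteq> []"
  shows "m_of (complement_seq d) =
    (if dd d (m_of d) = int (m_of d) - 1 then length d + 1 - m_of d else length d - m_of d)"
proof -
  let ?n = "length d" and ?m = "m_of d"
  let ?A = "{i\<in>{1..length (complement_seq d)}. int i - 1 \<le> dd (complement_seq d) i}"
  have mem: "i \<in> ?A \<longleftrightarrow> 1 \<le> i \<and> i \<le> ?n \<and> dd d (?n + 1 - i) \<le> int ?n - int i" for i
    using dd_complement_seq[OF d(1), of i] by auto
  have m: "1 \<le> ?m" "?m \<le> ?n" "int ?m - 1 \<le> dd d ?m"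
    using m_of_ge_1[OF d(2)] m_of_le_length[OF d(2)] dd_m_of_ge[OF d(2)] by auto
  have bound: "int y \<le> int ?n - min (int ?m) (dd d ?m)" if "y \<in> ?A" for y
  proof (cases "?m < ?n + 1 - y")
    case False
    then have "dd d ?m \<le> dd d (?n + 1 - y)"
      using that m unfolding mem by (intro admissible_dd_antimono[OF d(1)]) auto
    then show ?thesis using that unfolding mem by linarith
  qed (use that in \<open>auto simp: mem\<close>)
  show ?thesis
  proof (cases "dd d ?m = int ?m - 1")
    case True
    have "?n + 1 - ?m \<in> ?A" unfolding mem using m True by auto
    moreover have "y \<le> ?n + 1 - ?m" if "y \<in> ?A" for y
      using bound[OF that] True m by auto
    ultimately have "Max ?A = ?n + 1 - ?m" by (intro Max_eqI) auto
    then show ?thesis using True by (simp add: m_of_def)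
  next
    case False
    then have gt: "int ?m \<le> dd d ?m" using m by linarith
    have mn: "?m < ?n"
      using admissible_dd_less_length[OF d(1), of ?m] m gt by linarith
    have "dd d (?m + 1) \<le> int ?m - 1" using dd_beyond_m_of[OF d(1), of "?m + 1"] mn by simp
    then have "?n - ?m \<in> ?A" unfolding mem using m mn by (simp add: Suc_diff_Suc)
    moreover have "y \<le> ?n - ?m" if "y \<in> ?A" for y
      using bound[OF that] gt m by auto
    ultimately have "Max ?A = ?n - ?m" by (intro Max_eqI) auto
    then show ?thesis using False by (simp add: m_of_def)
  qed
qed

lemma Delta_complement_seq:
  assumes d: "admissible d" "d \<noteq> []" and k: "k \<le> m_of (complement_seq d)"
  shows "Delta (complement_seq d) k = slack d (length d - k)"
proof -
  have "k \<le> length d"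
    using k m_of_le_length[of "complement_seq d"] d(2) by simp
  then show ?thesis
    using Delta_eq_slack[OF admissible_complement_seq[OF d(1)] _ k] d(2)
      slack_complement_seq[OF d(1)] by simp
qed

lemma Delta_m_of_complement_seq:
  assumes d: "admissible d" "d \<noteq> []"
  shows "Delta (complement_seq d) (m_of (complement_seq d)) = Delta d (m_of d)"
proof -
  have "length d - m_of (complement_seq d) =
      (if dd d (m_of d) = int (m_of d) - 1 then m_of d - 1 else m_of d)"
    using m_of_complement_seq[OF d] m_of_ge_1[OF d(2)] m_of_le_length[OF d(2)] by auto
  then show ?thesis
    using Delta_complement_seq[OF d order.refl] slack_pred_m_of[OF d]
      Delta_eq_slack[OF d order.refl] by (simp split: if_splits)
qed

lemma Delta_complement_seq_le:
  assumes d: "admissible d" "d \<noteq> []" and "0 \<le> b"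
    and le: "\<forall>k\<in>{1..m_of d}. Delta d k \<le> b"
  shows "\<forall>k\<in>{1..m_of (complement_seq d)}. Delta (complement_seq d) k \<le> b"
proof
  fix k assume k: "k \<in> {1..m_of (complement_seq d)}"
  have "length d - k \<le> length d" by simp
  then obtain j where j: "j \<le> m_of d" "slack d (length d - k) \<le> slack d j"
    using slack_le_slack_upto_m_of[OF d(1)] by blast
  have "slack d j \<le> b"
  proof (cases "j = 0")
    case False
    then show ?thesis using bspec[OF le, of j] j(1) Delta_eq_slack[OF d j(1)] by simp
  qed (simp add: slack_0 \<open>0 \<le> b\<close>)
  then show "Delta (complement_seq d) k \<le> b"
    using Delta_complement_seq[OF d] k j(2) by simp
qed

lemma Delta_complement_seq_ge:
  assumes d: "admissible d" "d \<noteq> []" and "b \<le> 0"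
    and ge: "\<forall>k\<in>{1..m_of d}. b \<le> Delta d k"
  shows "\<forall>k\<in>{1..m_of (complement_seq d)}. b \<le> Delta (complement_seq d) k"
proof
  fix k assume k: "k \<in> {1..m_of (complement_seq d)}"
  have "length d - k \<le> length d" by simp
  then obtain j where j: "j \<le> m_of d" "slack d j \<le> slack d (length d - k)"
    using slack_ge_slack_upto_m_of[OF d(1)] by blast
  have "b \<le> slack d j"
  proof (cases "j = 0")
    case False
    then show ?thesis using bspec[OF ge, of j] j(1) Delta_eq_slack[OF d j(1)] by simp
  qed (simp add: slack_0 \<open>b \<le> 0\<close>)
  then show "b \<le> Delta (complement_seq d) k"
    using Delta_complement_seq[OF d] k j(2) by simp
qed

lemma Delta_le_Delta_star: "k \<in> {1..m_of d} \<Longrightarrow> Delta d k \<le> Delta_star d"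
  unfolding Delta_star_def by (intro Max_ge) auto

lemma Delta_star_complement_seq_le:
  assumes d: "admissible d" "d \<noteq> []" and "0 \<le> Delta_star d"
  shows "Delta_star (complement_seq d) \<le> Delta_star d"
proof -
  have "m_of (complement_seq d) \<in> {1..m_of (complement_seq d)}"
    using m_of_ge_1[of "complement_seq d"] d(2) by simp
  then show ?thesis
    using Delta_complement_seq_le[OF d \<open>0 \<le> Delta_star d\<close>] Delta_le_Delta_star[of _ d]
    unfolding Delta_star_def[of "complement_seq d"] by (intro Max.boundedI) auto
qed

subsection \<open>Degree sequences of graphs\<close>

lemma simple_graph_finite: "simple_graph V E \<Longrightarrow> finite V"
  by (simp add: simple_graph_def)

lemma simple_graph_complement: "simple_graph V E \<Longrightarrow> simple_graph V (complement V E)"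
  unfolding simple_graph_def complement_def by auto

lemma doubleton_in_complement_iff:
  assumes "u \<in> V" "v \<in> V" "u \<noteq> v"
  shows "{u, v} \<in> complement V E \<longleftrightarrow> {u, v} \<notin> E"
  using assms unfolding complement_def by (auto simp: doubleton_eq_iff insert_commute)

lemma degree_eq_card_adjacent:
  assumes "simple_graph V E" "v \<in> V"
  shows "degree E v = card {u\<in>V. u \<noteq> v \<and> {v, u} \<in> E}"
proof -
  have "{e\<in>E. v \<in> e} = (\<lambda>u. {v, u}) ` {u\<in>V. u \<noteq> v \<and> {v, u} \<in> E}"
  proof (intro equalityI subsetI)
    fix e assume e: "e \<in> {e\<in>E. v \<in> e}"
    then obtain a b where ab: "e = {a, b}" "a \<noteq> b" "a \<in> V" "b \<in> V"
      using assms(1) unfolding simple_graph_def by blast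
    then consider "v = a" | "v = b" using e by auto
    then show "e \<in> (\<lambda>u. {v, u}) ` {u\<in>V. u \<noteq> v \<and> {v, u} \<in> E}"
      by cases (use e ab in \<open>auto simp: insert_commute\<close>)
  qed auto
  moreover have "inj_on (\<lambda>u. {v, u}) {u\<in>V. u \<noteq> v \<and> {v, u} \<in> E}"
    by (auto simp: inj_on_def doubleton_eq_iff)
  ultimately show ?thesis unfolding degree_def by (simp add: card_image)
qed

lemma degree_complement:
  assumes g: "simple_graph V E" and v: "v \<in> V"
  shows "degree (complement V E) v + degree E v = card V - 1"
proof -
  let ?A = "{u\<in>V. u \<noteq> v \<and> {v, u} \<notin> E}" and ?B = "{u\<in>V. u \<noteq> v \<and> {v, u} \<in> E}"
  have "{u\<in>V. u \<noteq> v \<and> {v, u} \<in> complement V E} = ?A"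
    using doubleton_in_complement_iff[of v V] v by auto
  then have "degree (complement V E) v = card ?A"
    using degree_eq_card_adjacent[OF simple_graph_complement[OF g] v] by simp
  moreover have "card ?A + card ?B = card (V - {v})"
    using simple_graph_finite[OF g]
    by (subst card_Un_disjoint[symmetric]) (auto intro: arg_cong[where f = card])
  ultimately show ?thesis
    using degree_eq_card_adjacent[OF g v] v simple_graph_finite[OF g] by simp
qed

lemma mset_deg_seq: "mset (deg_seq V E) = image_mset (degree E) (mset_set V)"
  by (simp add: deg_seq_def)

lemma length_deg_seq: "length (deg_seq V E) = card V"
  by (metis mset_deg_seq size_image_mset size_mset size_mset_set)

lemma deg_seq_eq_Nil_iff: "finite V \<Longrightarrow> deg_seq V E = [] \<longleftrightarrow> V = {}"
  by (simp flip: length_0_conv add: length_deg_seq)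

lemma set_deg_seq: "finite V \<Longrightarrow> set (deg_seq V E) = degree E ` V"
  by (metis finite_set_mset_mset_set mset_deg_seq set_image_mset set_mset_mset)

lemma admissible_deg_seq:
  assumes g: "simple_graph V E"
  shows "admissible (deg_seq V E)"
proof -
  have "sorted_wrt (\<ge>) (deg_seq V E)"
    by (simp add: deg_seq_def sorted_wrt_rev)
  moreover have "x < card V" if x: "x \<in> set (deg_seq V E)" for x
  proof -
    obtain v where "v \<in> V" "x = degree E v"
      using x set_deg_seq[OF simple_graph_finite[OF g], of E] by auto
    moreover have "card V \<noteq> 0" using \<open>v \<in> V\<close> simple_graph_finite[OF g] by auto
    ultimately show ?thesis using degree_complement[OF g] by fastforce
  qed
  ultimately show ?thesis
    by (simp add: admissible_def length_deg_seq)
qed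

lemma deg_seq_complement:
  assumes g: "simple_graph V E"
  shows "deg_seq V (complement V E) = complement_seq (deg_seq V E)"
proof -
  define f where "f x = card V - 1 - x" for x :: nat
  define L where "L = sorted_list_of_multiset (image_mset (degree E) (mset_set V))"
  have "image_mset (degree (complement V E)) (mset_set V) = image_mset (f \<circ> degree E) (mset_set V)"
    using degree_complement[OF g] simple_graph_finite[OF g]
    by (intro image_mset_cong) (fastforce simp: f_def eq_diff_iff)
  then have "image_mset (degree (complement V E)) (mset_set V) = image_mset f (mset L)"
    by (simp add: L_def image_mset.compositionality)
  moreover have "sorted (rev (map f L))"
    unfolding sorted_wrt_rev sorted_wrt_map f_def L_def
    by (rule sorted_wrt_mono_rel[of _ "(\<le>)"]) auto
  ultimately have "sorted_list_of_multiset (image_mset (degree (complement V E)) (mset_set V))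
      = rev (map f L)"
    by (metis mset_map mset_rev sorted_list_of_multiset_mset sorted_sort_id)
  moreover have "complement_seq (deg_seq V E) = map f L"
    using length_deg_seq[of V E]
    unfolding complement_seq_def deg_seq_def f_def L_def by (simp add: rev_map)
  ultimately show ?thesis by (simp add: deg_seq_def)
qed

lemma sum_dd_deg_seq:
  "(\<Sum>i\<in>{1..card V}. h (dd (deg_seq V E) i)) = (\<Sum>v\<in>V. h (int (degree E v)))"
proof -
  let ?d = "deg_seq V E"
  have "(\<Sum>i\<in>{1..card V}. h (dd ?d i)) = (\<Sum>i<card V. h (int (?d ! i)))"
    by (rule sum.reindex_bij_witness[of _ Suc "\<lambda>i. i - 1"]) (auto simp: dd_def)
  also have "\<dots> = sum_list (map (\<lambda>x. h (int x)) ?d)"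
    by (simp add: sum_list_sum_nth length_deg_seq atLeast0LessThan)
  also have "\<dots> = sum_mset (image_mset (\<lambda>x. h (int x)) (image_mset (degree E) (mset_set V)))"
    by (metis mset_deg_seq mset_map sum_mset_sum_list)
  also have "\<dots> = (\<Sum>v\<in>V. h (int (degree E v)))"
    by (simp add: sum_unfold_sum_mset image_mset.compositionality comp_def)
  finally show ?thesis .
qed

lemma degree_ge_1_if_edge:
  assumes g: "simple_graph V E" and "u \<in> V" "v \<in> V" "u \<noteq> v" "{u, v} \<in> E"
  shows "1 \<le> degree E v"
proof -
  have "u \<in> {w\<in>V. w \<noteq> v \<and> {v, w} \<in> E}" using assms by (simp add: insert_commute)
  then have "card {w\<in>V. w \<noteq> v \<and> {v, w} \<in> E} \<noteq> 0"
    using simple_graph_finite[OF g] by auto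
  then show ?thesis using degree_eq_card_adjacent[OF g \<open>v \<in> V\<close>] by simp
qed

text \<open>The case k = 1 of the Erdos-Gallai inequalities: a vertex of maximum degree and its
  neighbours all have positive degree.\<close>
lemma Delta_deg_seq_1_nonneg:
  assumes g: "simple_graph V E" and "V \<noteq> {}"
  shows "0 \<le> Delta (deg_seq V E) 1"
proof -
  let ?d = "deg_seq V E" and ?n = "card V"
  have fin: "finite V" using simple_graph_finite[OF g] .
  have n: "1 \<le> ?n" using fin \<open>V \<noteq> {}\<close> by (simp add: Suc_le_eq card_gt_0_iff)
  then have "?d ! 0 \<in> set ?d" using length_deg_seq[of V E] by simp
  then obtain v0 where v0: "v0 \<in> V" "dd ?d 1 = int (degree E v0)"
    using set_deg_seq[OF fin, of E] by (auto simp: dd_def)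
  have "int (degree E v0) + min 1 (int (degree E v0)) \<le> (\<Sum>v\<in>V. min 1 (int (degree E v)))"
  proof (cases "degree E v0 = 0")
    case True
    then show ?thesis by (simp add: sum_nonneg)
  next
    case False
    define N where "N = {u\<in>V. u \<noteq> v0 \<and> {v0, u} \<in> E}"
    have "finite N" "v0 \<notin> N" using fin unfolding N_def by auto
    have "\<forall>v\<in>insert v0 N. min 1 (int (degree E v)) = 1"
      using False degree_ge_1_if_edge[OF g v0(1)] unfolding N_def by auto
    moreover have "card N = degree E v0"
      using degree_eq_card_adjacent[OF g v0(1)] unfolding N_def by simp
    ultimately have "(\<Sum>v\<in>insert v0 N. min 1 (int (degree E v))) = int (degree E v0) + 1"
      using \<open>finite N\<close> \<open>v0 \<notin> N\<close> by simp
    moreover have "(\<Sum>v\<in>insert v0 N. min 1 (int (degree E v))) \<le> (\<Sum>v\<in>V. min 1 (int (degree E v)))"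
      using fin v0(1) unfolding N_def by (intro sum_mono2) auto
    ultimately show ?thesis using False by simp
  qed
  moreover have "(\<Sum>i\<in>{1..?n}. min 1 (dd ?d i)) = min 1 (dd ?d 1) + (\<Sum>i\<in>{2..?n}. min 1 (dd ?d i))"
    using sum_split_Icc[of 0 1 ?n "\<lambda>i. min 1 (dd ?d i)"] n by (simp add: numeral_2_eq_2)
  moreover have "Delta ?d 1 = (\<Sum>i\<in>{2..?n}. min 1 (dd ?d i)) - dd ?d 1"
    unfolding Delta_def length_deg_seq by (simp add: numeral_2_eq_2)
  ultimately show ?thesis using sum_dd_deg_seq[of "min 1" V E] v0(2) by simp
qed

lemma Delta_star_deg_seq_nonneg:
  assumes "simple_graph V E" and "V \<noteq> {}"
  shows "0 \<le> Delta_star (deg_seq V E)"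
proof -
  have "deg_seq V E \<noteq> []"
    using assms deg_seq_eq_Nil_iff simple_graph_finite by blast
  then have "1 \<in> {1..m_of (deg_seq V E)}" using m_of_ge_1 by simp
  then show ?thesis using Delta_le_Delta_star Delta_deg_seq_1_nonneg[OF assms] by fastforce
qed

lemma split_graph_complement:
  assumes "split_graph V E"
  shows "split_graph V (complement V E)"
proof -
  obtain K S where KS: "K \<union> S = V" "K \<inter> S = {}"
      "\<forall>u\<in>K. \<forall>v\<in>K. u \<noteq> v \<longrightarrow> {u, v} \<in> E" "\<forall>u\<in>S. \<forall>v\<in>S. {u, v} \<notin> E"
    using assms unfolding split_graph_def by blast
  have "\<forall>u\<in>S. \<forall>v\<in>S. u \<noteq> v \<longrightarrow> {u, v} \<in> complement V E"
    using KS(1,4) doubleton_in_complement_iff[of _ V _ E] by blast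
  moreover have "\<forall>u\<in>K. \<forall>v\<in>K. {u, v} \<notin> complement V E"
    using KS(1,3) doubleton_in_complement_iff[of _ V _ E]
    unfolding complement_def by (auto simp: doubleton_eq_iff)
  ultimately show ?thesis
    unfolding split_graph_def using KS(1,2) by (intro exI[of _ S] exI[of _ K]) auto
qed

theorem corollary11:
  fixes I :: "int set" and V :: "'a set" and E :: "'a set set"
  assumes "I \<subseteq> {0..}" and "simple_graph V E"
  shows "(Delta (deg_seq V E) (m_of (deg_seq V E)) \<in> I \<longrightarrow>
            Delta (deg_seq V (complement V E)) (m_of (deg_seq V (complement V E))) \<in> I)
       \<and> (Delta_star (deg_seq V E) \<in> I \<longrightarrow>
            Delta_star (deg_seq V (complement V E)) \<in> I)
       \<and> (split_graph V E \<longrightarrow> split_graph V (complement V E))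
       \<and> (threshold_graph V E \<longrightarrow> threshold_graph V (complement V E))
       \<and> (weakly_threshold_graph V E \<longrightarrow> weakly_threshold_graph V (complement V E))"
proof (cases "V = {}")
  case True
  then have "E = {}" "complement V E = {}"
    using assms(2) unfolding simple_graph_def complement_def by auto
  then show ?thesis by simp
next
  case False
  note g = assms(2)
  let ?d = "deg_seq V E"
  have d: "admissible ?d" "?d \<noteq> []"
    using admissible_deg_seq[OF g] deg_seq_eq_Nil_iff[OF simple_graph_finite[OF g]] False by auto
  have dc: "deg_seq V (complement V E) = complement_seq ?d"
    using deg_seq_complement[OF g] .
  have "Delta_star (complement_seq ?d) = Delta_star ?d"
    using Delta_star_complement_seq_le[OF d Delta_star_deg_seq_nonneg[OF g False]]
      Delta_star_complement_seq_le[OF admissible_complement_seq[OF d(1)]]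
      Delta_star_deg_seq_nonneg[OF simple_graph_complement[OF g] False]
      complement_seq_complement_seq[OF d(1)] d(2) dc by fastforce
  moreover have "threshold_graph V E \<longrightarrow> threshold_graph V (complement V E)"
    using Delta_complement_seq_le[OF d, of 0] Delta_complement_seq_ge[OF d, of 0]
    unfolding threshold_graph_def dc by (auto intro!: order.antisym)
  ultimately show ?thesis
    using Delta_m_of_complement_seq[OF d] split_graph_complement Delta_complement_seq_le[OF d, of 1]
    unfolding weakly_threshold_graph_def dc by auto
qed

end
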